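(* If $X$ is an infinite Tychonoff space, then $\mathcal{F}(X)$ is not pseudocompact.
   Context: $\mathcal{F}(X)$ is the set of nonempty finite subsets of $X$ with the Vietoris topology (generated by $U^+=\{A: A\subset U\}$ and $U^-=\{A: A\cap U\neq\emptyset\}$ for $U$ open in $X$). A Tychonoff space is pseudocompact if every locally finite collection of nonempty open sets is finite. *)

theory Defs
  imports "HOL-Analysis.Analysis"
begin

text \<open>Tychonoff space: completely regular and Hausdorff (T1 + completely regular is equivalent).\<close>
definition tychonoff_space :: "'a topology \<Rightarrow> bool" where
  "tychonoff_space X \<longleftrightarrow> completely_regular_space X \<and> Hausdorff_space X"

text \<open>The hyperspace F(X) of nonempty finite subsets with the Vietoris topology,
  generated (as a subbasis) by U^+ and U^- for U open in X.\<close>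
definition fin_hyperspace :: "'a topology \<Rightarrow> 'a set topology" where
  "fin_hyperspace X = topology_generated_by
     ({{A. finite A \<and> A \<noteq> {} \<and> A \<subseteq> topspace X \<and> A \<subseteq> U} | U. openin X U} \<union>
      {{A. finite A \<and> A \<noteq> {} \<and> A \<subseteq> topspace X \<and> A \<inter> U \<noteq> {}} | U. openin X U})"

definition pseudocompact_space :: "'a topology \<Rightarrow> bool" where
  "pseudocompact_space X \<longleftrightarrow>
     (\<forall>\<U>. (\<forall>U\<in>\<U>. openin X U \<and> U \<noteq> {}) \<and> locally_finite_in X \<U> \<longrightarrow> finite \<U>)"

end

theory Submission
  imports Defs
begin

text \<open>An infinite open set R of a regular Hausdorff space contains a nonempty open U and an
  infinite open R' whose closure is disjoint from that of U. Iterating inside R' gives nonempty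
  open sets U_0, U_1, ... with pairwise disjoint closures. In F(X) the sets
  W_n = U_0^- \<inter> ... \<inter> U_n^- are then nonempty, open and pairwise distinct, and they form a
  locally finite family: a finite set A misses the closure of some U_i, so (X - cl U_i)^+ is a
  neighbourhood of A meeting only W_0, ..., W_(i-1).\<close>

lemma regular_space_openin_closure_of_subset:
  assumes "regular_space X" "openin X W" "x \<in> W"
  obtains U where "openin X U" "x \<in> U" "X closure_of U \<subseteq> W"
proof -
  obtain U V where "openin X U" "closedin X V" "x \<in> U" "U \<subseteq> V" "V \<subseteq> W"
    using assms neighbourhood_base_of_closedin neighbourhood_base_of by metis
  then show thesis
    using that closure_of_minimal by (metis order_trans)
qed

lemma regular_Hausdorff_space_split_infinite_openin:
  assumes reg: "regular_space X" and "Hausdorff_space X"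
    and R: "openin X R" "infinite R"
  obtains U R' where "openin X U" "U \<noteq> {}" "U \<subseteq> R" "openin X R'" "infinite R'" "R' \<subseteq> R"
    "disjnt (X closure_of U) (X closure_of R')"
proof -
  note result = that
  have split_off: thesis
    if V: "openin X V" "z \<in> V" "X closure_of V \<subseteq> R" and inf: "infinite (R - X closure_of V)" for V z
  proof -
    obtain U where U: "openin X U" "z \<in> U" "X closure_of U \<subseteq> V"
      using regular_space_openin_closure_of_subset[OF reg V(1,2)] by blast
    have "V \<inter> X closure_of (R - X closure_of V) = {}"
      using V(1) closure_of_subset[OF openin_subset[OF V(1)]]
      by (auto simp: openin_Int_closure_of_eq_empty)
    then have "disjnt (X closure_of U) (X closure_of (R - X closure_of V))"
      using U(3) by (auto simp: disjnt_def)
    moreover have "U \<subseteq> R"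
      using U V closure_of_subset[OF openin_subset[OF U(1)]] closure_of_subset[OF openin_subset[OF V(1)]]
      by blast
    moreover have "openin X (R - X closure_of V)"
      using R(1) by (simp add: openin_diff)
    ultimately show thesis
      using result[of U "R - X closure_of V"] U inf by blast
  qed
  obtain x where x: "x \<in> R"
    using infinite_imp_nonempty[OF R(2)] by blast
  obtain y where y: "y \<in> R" "y \<noteq> x"
    using infinite_imp_nonempty[OF infinite_remove[OF R(2), of x]] by blast
  obtain G H where GH: "openin X G" "openin X H" "x \<in> G" "y \<in> H" "disjnt G H"
    using \<open>Hausdorff_space X\<close> x y openin_subset[OF R(1)] unfolding Hausdorff_space_def
    by (metis subsetD)
  obtain G' where G': "openin X G'" "x \<in> G'" "X closure_of G' \<subseteq> G \<inter> R"
    using regular_space_openin_closure_of_subset[OF reg, of "G \<inter> R" x] GH R x by blast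
  obtain H' where H': "openin X H'" "y \<in> H'" "X closure_of H' \<subseteq> H \<inter> R"
    using regular_space_openin_closure_of_subset[OF reg, of "H \<inter> R" y] GH R y by blast
  have "R = (R - X closure_of G') \<union> (R - X closure_of H')"
    using G' H' GH(5) by (auto simp: disjnt_iff)
  then have "infinite (R - X closure_of G') \<or> infinite (R - X closure_of H')"
    using R(2) by (metis finite_Un)
  then show thesis
  proof
    show "infinite (R - X closure_of G') \<Longrightarrow> thesis"
      using split_off[OF G'(1,2)] G'(3) by blast
    show "infinite (R - X closure_of H') \<Longrightarrow> thesis"
      using split_off[OF H'(1,2)] H'(3) by blast
  qed
qed

lemma regular_Hausdorff_space_disjoint_closures_seq:
  assumes reg: "regular_space X" and Hd: "Hausdorff_space X" and inf: "infinite (topspace X)"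
  obtains U :: "nat \<Rightarrow> 'a set"
  where "\<And>n. openin X (U n)" "\<And>n. U n \<noteq> {}" "disjoint_family (\<lambda>n. X closure_of U n)"
proof -
  have "\<exists>U R'. openin X U \<and> U \<noteq> {} \<and> U \<subseteq> R \<and> openin X R' \<and> infinite R' \<and> R' \<subseteq> R
          \<and> disjnt (X closure_of U) (X closure_of R')" if "openin X R" "infinite R" for R
    by (rule regular_Hausdorff_space_split_infinite_openin[OF reg Hd that]) (intro exI conjI; assumption)
  then obtain piece rest where piece_rest:
    "\<And>R. \<lbrakk>openin X R; infinite R\<rbrakk> \<Longrightarrow> openin X (piece R) \<and> piece R \<noteq> {} \<and> piece R \<subseteq> R
        \<and> openin X (rest R) \<and> infinite (rest R) \<and> rest R \<subseteq> R
        \<and> disjnt (X closure_of piece R) (X closure_of rest R)"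
    by metis
  define S where "S n = (rest ^^ n) (topspace X)" for n
  have S: "openin X (S n) \<and> infinite (S n)" for n
    by (induction n) (simp_all add: S_def inf piece_rest)
  have S_Suc: "S (Suc n) = rest (S n)" for n
    by (simp add: S_def)
  have "decseq S"
    by (rule decseq_SucI) (use S piece_rest in \<open>simp add: S_Suc\<close>)
  define U where "U n = piece (S n)" for n
  have disjnt_less: "disjnt (X closure_of U m) (X closure_of U n)" if "m < n" for m n
  proof -
    have "U n \<subseteq> S n"
      using piece_rest S unfolding U_def by blast
    also have "\<dots> \<subseteq> S (Suc m)"
      using decseqD[OF \<open>decseq S\<close>] that by simp
    finally have "U n \<subseteq> S (Suc m)" .
    then have "X closure_of U n \<subseteq> X closure_of rest (S m)"
      by (simp add: S_Suc closure_of_mono)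
    then show ?thesis
      using piece_rest[OF S[THEN conjunct1] S[THEN conjunct2], of m] unfolding U_def
      by (meson disjnt_subset2)
  qed
  show thesis
  proof
    show "openin X (U n)" "U n \<noteq> {}" for n
      using piece_rest S unfolding U_def by auto
    show "disjoint_family (\<lambda>n. X closure_of U n)"
      unfolding disjoint_family_on_def
      by (metis disjnt_def disjnt_less disjnt_sym linorder_neq_iff)
  qed
qed

definition vietoris_upper :: "'a topology \<Rightarrow> 'a set \<Rightarrow> 'a set set" where
  "vietoris_upper X U = {A. finite A \<and> A \<noteq> {} \<and> A \<subseteq> topspace X \<and> A \<subseteq> U}"

definition vietoris_lower :: "'a topology \<Rightarrow> 'a set \<Rightarrow> 'a set set" where
  "vietoris_lower X U = {A. finite A \<and> A \<noteq> {} \<and> A \<subseteq> topspace X \<and> A \<inter> U \<noteq> {}}"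

lemma fin_hyperspace_eq_vietoris:
  "fin_hyperspace X = topology_generated_by
     ({vietoris_upper X U | U. openin X U} \<union> {vietoris_lower X U | U. openin X U})"
  by (simp add: fin_hyperspace_def vietoris_upper_def vietoris_lower_def)

lemma openin_fin_hyperspace_upper:
  "openin X U \<Longrightarrow> openin (fin_hyperspace X) (vietoris_upper X U)"
  unfolding fin_hyperspace_eq_vietoris by (rule topology_generated_by_Basis) blast

lemma openin_fin_hyperspace_lower:
  "openin X U \<Longrightarrow> openin (fin_hyperspace X) (vietoris_lower X U)"
  unfolding fin_hyperspace_eq_vietoris by (rule topology_generated_by_Basis) blast

lemma topspace_fin_hyperspace:
  "topspace (fin_hyperspace X) = {A. finite A \<and> A \<noteq> {} \<and> A \<subseteq> topspace X}"
  unfolding fin_hyperspace_def topology_generated_by_topspace by blast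

lemma locally_finite_in_fin_hyperspace_lower_chain:
  fixes U :: "nat \<Rightarrow> 'a set"
  assumes point_finite: "\<And>a. finite {i. a \<in> X closure_of U i}"
  shows "locally_finite_in (fin_hyperspace X) (range (\<lambda>n. \<Inter>i\<le>n. vietoris_lower X (U i)))"
  unfolding locally_finite_in_def
proof (intro conjI ballI)
  let ?W = "\<lambda>n. \<Inter>i\<le>n. vietoris_lower X (U i)"
  have "?W n \<subseteq> vietoris_lower X (U 0)" for n
    by (rule INT_lower) simp
  moreover have "vietoris_lower X (U 0) \<subseteq> topspace (fin_hyperspace X)"
    by (auto simp: topspace_fin_hyperspace vietoris_lower_def)
  ultimately show "\<Union> (range ?W) \<subseteq> topspace (fin_hyperspace X)"
    by blast
  fix A assume "A \<in> topspace (fin_hyperspace X)"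
  then have A: "finite A" "A \<noteq> {}" "A \<subseteq> topspace X"
    by (auto simp: topspace_fin_hyperspace)
  have "{i. A \<inter> X closure_of U i \<noteq> {}} = (\<Union>a\<in>A. {i. a \<in> X closure_of U i})"
    by blast
  then have "finite {i. A \<inter> X closure_of U i \<noteq> {}}"
    using A(1) point_finite by simp
  then obtain i where i: "A \<inter> X closure_of U i = {}"
    using ex_new_if_finite[OF infinite_UNIV_nat] by blast
  define V where "V = vietoris_upper X (topspace X - X closure_of U i)"
  have "openin (fin_hyperspace X) V"
    unfolding V_def by (rule openin_fin_hyperspace_upper) (simp add: openin_diff)
  moreover have "A \<in> V"
    using A i by (auto simp: V_def vietoris_upper_def)
  moreover have W_disjnt_V: "?W n \<inter> V = {}" if "i \<le> n" for n
  proof -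
    have "B \<notin> V" if "B \<in> ?W n" for B
    proof
      assume "B \<in> V"
      then have "B \<subseteq> topspace X - X closure_of U i"
        by (simp add: V_def vietoris_upper_def)
      moreover have "B \<inter> U i \<noteq> {}"
        using \<open>B \<in> ?W n\<close> \<open>i \<le> n\<close> by (auto simp: vietoris_lower_def)
      ultimately show False
        using closure_of_subset_Int[of X "U i"] by blast
    qed
    then show ?thesis
      by blast
  qed
  have "{S \<in> range ?W. S \<inter> V \<noteq> {}} \<subseteq> ?W ` {..<i}"
  proof
    fix S assume "S \<in> {S \<in> range ?W. S \<inter> V \<noteq> {}}"
    then obtain n where "S = ?W n" "?W n \<inter> V \<noteq> {}"
      by blast
    moreover have "n < i"
      using W_disjnt_V[of n] \<open>?W n \<inter> V \<noteq> {}\<close> by (meson not_le)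
    ultimately show "S \<in> ?W ` {..<i}"
      by simp
  qed
  then have "finite {S \<in> range ?W. S \<inter> V \<noteq> {}}"
    by (rule finite_subset) simp
  ultimately show "\<exists>V. openin (fin_hyperspace X) V \<and> A \<in> V \<and> finite {S \<in> range ?W. S \<inter> V \<noteq> {}}"
    by blast
qed

lemma not_pseudocompact_fin_hyperspace_if_disjoint_closures:
  fixes U :: "nat \<Rightarrow> 'a set"
  assumes U_open: "\<And>n. openin X (U n)" and U_nonempty: "\<And>n. U n \<noteq> {}"
    and disjoint_closures: "disjoint_family (\<lambda>n. X closure_of U n)"
  shows "\<not> pseudocompact_space (fin_hyperspace X)"
proof -
  define W where "W n = (\<Inter>i\<le>n. vietoris_lower X (U i))" for n
  have W_open: "openin (fin_hyperspace X) (W n)" for n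
    unfolding W_def by (intro openin_INT2 openin_fin_hyperspace_lower U_open) auto
  have "finite {i. a \<in> X closure_of U i}" for a
  proof (cases "\<exists>j. a \<in> X closure_of U j")
    case True
    then obtain j where "{i. a \<in> X closure_of U i} \<subseteq> {j}"
      using disjoint_closures by (auto simp: disjoint_family_on_def)
    then show ?thesis
      by (rule finite_subset) simp
  qed simp
  then have "locally_finite_in (fin_hyperspace X) (range W)"
    unfolding W_def by (rule locally_finite_in_fin_hyperspace_lower_chain)
  have U_disjoint: "U m \<inter> U n = {}" if "m \<noteq> n" for m n
  proof -
    have "X closure_of U m \<inter> X closure_of U n = {}"
      using disjoint_family_onD[OF disjoint_closures _ _ that] by simp
    then show ?thesis
      using closure_of_subset[OF openin_subset[OF U_open]] by blast
  qed
  define x where "x i = (SOME y. y \<in> U i)" for i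
  have x: "x i \<in> U i" for i
    unfolding x_def using U_nonempty by (simp add: some_in_eq)
  have initial_segment_in_W: "x ` {..m} \<in> W n \<longleftrightarrow> n \<le> m" for m n
  proof
    assume "x ` {..m} \<in> W n"
    then obtain k where "k \<le> m" "x k \<in> U n"
      by (auto simp: W_def vietoris_lower_def)
    then have "k = n"
      using x[of k] U_disjoint[of k n] by blast
    then show "n \<le> m"
      using \<open>k \<le> m\<close> by simp
  next
    assume "n \<le> m"
    have "finite (x ` {..m})" "x ` {..m} \<subseteq> topspace X"
      using x openin_subset[OF U_open] by blast+
    moreover have "x i \<in> x ` {..m} \<inter> U i" if "i \<le> n" for i
      using x that \<open>n \<le> m\<close> by auto
    ultimately show "x ` {..m} \<in> W n"
      unfolding W_def vietoris_lower_def by blast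
  qed
  then have "W n \<noteq> {}" for n
    by blast
  moreover have "inj W"
  proof (rule injI)
    fix m n assume "W m = W n"
    then have "n \<le> m" "m \<le> n"
      using initial_segment_in_W[of m] initial_segment_in_W[of n] by auto
    then show "m = n"
      by simp
  qed
  then have "infinite (range W)"
    by (rule range_inj_infinite)
  ultimately have "(\<forall>S\<in>range W. openin (fin_hyperspace X) S \<and> S \<noteq> {})
      \<and> locally_finite_in (fin_hyperspace X) (range W) \<and> infinite (range W)"
    using W_open \<open>locally_finite_in (fin_hyperspace X) (range W)\<close> by blast
  then show ?thesis
    unfolding pseudocompact_space_def by blast
qed

theorem lemma4p6:
  fixes X :: "'a topology"
  assumes "tychonoff_space X" and "infinite (topspace X)"
  shows "\<not> pseudocompact_space (fin_hyperspace X)"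
proof -
  have "regular_space X" "Hausdorff_space X"
    using assms(1) completely_regular_imp_regular_space unfolding tychonoff_space_def by auto
  then obtain U :: "nat \<Rightarrow> 'a set" where "\<And>n. openin X (U n)" "\<And>n. U n \<noteq> {}"
    "disjoint_family (\<lambda>n. X closure_of U n)"
    by (rule regular_Hausdorff_space_disjoint_closures_seq[OF _ _ assms(2)]) blast
  then show ?thesis
    by (rule not_pseudocompact_fin_hyperspace_if_disjoint_closures)
qed

end
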